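(* Let $L>0$ and $\rho_{0,L}\in L^\infty(\mathbb T_L)$ (nonnegative, $c_L=\int_{\mathbb T_L}\rho_{0,L}\le1$). Then there exists $T_0=T_0(\|\rho_{0,L}\|_{L^\infty},\|K'\|_{L^\infty})>0$ such that for every $N\in\mathbb N$ the deterministic particle approximation $\rho^N_L$ starting from $\rho_{0,L}$ is well defined on $[0,T_0)$.
   Context: Standing assumptions: $K:\mathbb R\to\mathbb R$ satisfies $K(z)=K(|z|)$, $K\in C^0(\mathbb R)\cap C^2(\mathbb R\setminus\{0\})$, $K,K'\in L^\infty(\mathbb R)$, $K''\in L^\infty(\mathbb R\setminus\{0\})$, $\|K'\|_{L^1(\mathbb R)}<\infty$. $W:[0,\infty)\to[0,\infty)$ and $\phi(\rho):=\rho W'(\rho)-W(\rho)$ is $C^1$ with $\phi(0)=0$, $\phi$ strictly increasing, $\phi'(\rho)\rho\le c_0\phi(\rho)$, $\phi(\rho)\le\max\{\rho,c_0W(\rho)\}$ for some $c_0>0$, and there are $c_1,c_2>0$, $\hat\rho<1<\bar\rho$ with $\phi(\rho)\le c_1\rho$ for $\rho\le\hat\rho$ and $\phi(\rho)\ge c_2\rho$ for $\rho\ge\bar\rho$. $\mathbb T_L=\mathbb R/L\mathbb Z\cong[-L/2,L/2)$. Deterministic particle approximation: set $x_0=-L/2$, $x_k=\sup\{x:\int_{x_{k-1}}^x\rho_{0,L}<c_L/N\}$, $k=1,\dots,N$; particles $x_k(t)$ (indices mod $N$) solve $\dot x_k=-\frac{c_L}{N}\sum_{j\ne k}K'(x_k-x_j)-\frac{N}{c_L}[\phi(\rho_k)-\phi(\rho_{k-1})]$,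 $x_k(0)=x_k$, with $\rho_k(t)=\frac{c_L}{N(x_{k+1}(t)-x_k(t))}$, and $\rho^N_L(t,x)=\sum_{k=0}^{N-1}\rho_k(t)\chi_{[x_k(t),x_{k+1}(t))}(x)$; it is well-defined on $[0,T_0)$ if the solution exists there with $x_0(t)<\dots<x_{N-1}(t)$ for all $t\in[0,T_0)$. *)

theory Defs
  imports "HOL-Analysis.Analysis" "HOL-Probability.Essential_Supremum"
begin

definition mass_L :: "real \<Rightarrow> (real \<Rightarrow> real) \<Rightarrow> real" where
  "mass_L L rho0 = (LINT y:{-L/2..L/2}|lborel. rho0 y)"

fun init_pos :: "real \<Rightarrow> (real \<Rightarrow> real) \<Rightarrow> nat \<Rightarrow> nat \<Rightarrow> real" where
  "init_pos L rho0 N 0 = - L / 2"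
| "init_pos L rho0 N (Suc k) =
     Sup {x. (LINT y:{init_pos L rho0 N k..x}|lborel. rho0 y) < mass_L L rho0 / real N}"

text \<open>Right neighbour of particle k (indices mod N, with x_N = x_0 + L on the torus).\<close>
definition next_pos :: "real \<Rightarrow> nat \<Rightarrow> (nat \<Rightarrow> real \<Rightarrow> real) \<Rightarrow> nat \<Rightarrow> real \<Rightarrow> real" where
  "next_pos L N x k t = (if Suc k = N then x 0 t + L else x (Suc k) t)"

definition disc_rho :: "real \<Rightarrow> real \<Rightarrow> nat \<Rightarrow> (nat \<Rightarrow> real \<Rightarrow> real) \<Rightarrow> nat \<Rightarrow> real \<Rightarrow> real" where
  "disc_rho L c N x k t = c / (real N * (next_pos L N x k t - x k t))"

definition prev_idx :: "nat \<Rightarrow> nat \<Rightarrow> nat" where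
  "prev_idx N k = (if k = 0 then N - 1 else k - 1)"

definition particle_well_defined ::
  "(real \<Rightarrow> real) \<Rightarrow> (real \<Rightarrow> real) \<Rightarrow> real \<Rightarrow> (real \<Rightarrow> real) \<Rightarrow> nat \<Rightarrow> real \<Rightarrow> bool" where
  "particle_well_defined K' phi L rho0 N T0 \<longleftrightarrow>
     (let c = mass_L L rho0 in
      \<exists>x :: nat \<Rightarrow> real \<Rightarrow> real.
        (\<forall>k<N. x k 0 = init_pos L rho0 N k) \<and>
        (\<forall>t\<in>{0..<T0}. \<forall>k. Suc k < N \<longrightarrow> x k t < x (Suc k) t) \<and>
        (\<forall>k<N. \<forall>t\<in>{0..<T0}.
           ((\<lambda>s. x k s) has_real_derivative
              (- (c / real N) * (\<Sum>j\<in>{..<N} - {k}. K' (x k t - x j t))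
               - (real N / c) * (phi (disc_rho L c N x k t)
                                 - phi (disc_rho L c N x (prev_idx N k) t))))
           (at t within {0..<T0})))"

end

theory Submission
  imports Defs
begin

text \<open>
  Clamp K' outside (-delta, delta) and replace every gap g by max g delta in the pressure
  term. The resulting vector field is globally Lipschitz, so Picard iteration gives a
  solution on [0,1] from the initial positions, which are strictly ordered because
  consecutive particles enclose the mass c/N of a bounded density.

  Along this solution the energy E = sum_k G(g_k) of the gaps, where G' = -phi(c/(N max g delta))
  is convex, grows at most linearly: summation by parts turns dE/dt into
  sum_k v_k (p_k - p_(k-1)), and as v_k = F_k - (N/c) (p_k - p_(k-1)) with |F_k| <= c B for a
  bound B of |K'|, completing the square bounds it by c^3 B^2/4. By convexity every single
  term G(g_k) - G(L/N) + G'(L/N) (g_k - L/N) is at most E - N G(L/N), which is bounded in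
  terms of the smallest initial gap, whereas phi(rho) >= c2 rho for large rho makes this
  term grow like (c2 c/N) log(1/g_k) as g_k goes to 0. Hence for delta small no gap reaches
  delta before time 1: the truncation is never active, and the truncated solution solves
  the particle system. So T0 = 1 works for every datum; of the hypotheses only the bounds
  on K' and K'' and the properties of phi are needed.
\<close>

section \<open>Picard iteration for Lipschitz vector fields\<close>

lemma integral_monomial:
  fixes t :: real
  assumes "0 \<le> t"
  shows "integral {0..t} (\<lambda>s. s ^ n) = t ^ Suc n / Suc n"
proof -
  have "((\<lambda>s. s ^ Suc n / Suc n) has_real_derivative s ^ n) (at s)" for s :: real
    using DERIV_cdivide[OF DERIV_pow[of "Suc n" s], of "Suc n"] by simp
  then have "((\<lambda>s. s ^ n) has_integral t ^ Suc n / Suc n - 0 ^ Suc n / Suc n) {0..t}"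
    using assms by (intro fundamental_theorem_of_calculus)
      (auto intro: has_field_derivative_at_within simp flip: has_real_derivative_iff_has_vector_derivative)
  from integral_unique[OF this] show ?thesis
    by simp
qed

lemma uniform_limit_sum_abs_le:
  fixes Y :: "nat \<Rightarrow> 'a \<Rightarrow> nat \<Rightarrow> real"
  assumes lim: "\<And>j. j < N \<Longrightarrow> uniform_limit S (\<lambda>n s. Y n s j) (\<lambda>s. X s j) sequentially" and "0 < e"
  shows "\<forall>\<^sub>F n in sequentially. \<forall>s\<in>S. (\<Sum>j<N. \<bar>Y n s j - X s j\<bar>) \<le> e"
proof -
  have "\<forall>\<^sub>F n in sequentially. \<forall>j\<in>{..<N}. \<forall>s\<in>S. dist (Y n s j) (X s j) < e / (N + 1)"
    using lim \<open>0 < e\<close> unfolding uniform_limit_iff by (intro eventually_ball_finite) auto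
  then show ?thesis
  proof eventually_elim
    case (elim n)
    have "(\<Sum>j<N. \<bar>Y n s j - X s j\<bar>) \<le> card {..<N} * (e / (N + 1))" if "s \<in> S" for s
      by (rule sum_bounded_above) (use elim that in \<open>auto simp: dist_real_def less_imp_le\<close>)
    moreover have "N * (e / (N + 1)) \<le> e"
      using \<open>0 < e\<close> by (simp add: field_simps)
    ultimately show ?case
      by (metis card_lessThan order.trans)
  qed
qed

text \<open>
  A state is a map nat \<Rightarrow> real of which only the first N coordinates matter; paths are
  written time first, X t k.
\<close>

locale lipschitz_field =
  fixes N :: nat and f :: "(nat \<Rightarrow> real) \<Rightarrow> nat \<Rightarrow> real" and Lp :: real
  assumes Lp_nonneg: "0 \<le> Lp"
    and lipschitz: "\<And>y z k. k < N \<Longrightarrow> \<bar>f y k - f z k\<bar> \<le> Lp * (\<Sum>j<N. \<bar>y j - z j\<bar>)"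
begin

lemma continuous_on_field:
  fixes Y :: "'a::topological_space \<Rightarrow> nat \<Rightarrow> real"
  assumes Y: "\<forall>j<N. continuous_on S (\<lambda>s. Y s j)" and k: "k < N"
  shows "continuous_on S (\<lambda>s. f (Y s) k)"
  unfolding continuous_on_def
proof
  fix s0 assume s0: "s0 \<in> S"
  have "((\<lambda>s. Lp * (\<Sum>j<N. \<bar>Y s j - Y s0 j\<bar>)) \<longlongrightarrow> Lp * (\<Sum>j<N. \<bar>Y s0 j - Y s0 j\<bar>)) (at s0 within S)"
    using Y s0 unfolding continuous_on_def by (intro tendsto_intros) auto
  then have "((\<lambda>s. Lp * (\<Sum>j<N. \<bar>Y s j - Y s0 j\<bar>)) \<longlongrightarrow> 0) (at s0 within S)"
    by simp
  then have "((\<lambda>s. f (Y s) k - f (Y s0) k) \<longlongrightarrow> 0) (at s0 within S)"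
    by (rule Lim_null_comparison[rotated]) (use lipschitz[OF k] in simp)
  then show "((\<lambda>s. f (Y s) k) \<longlongrightarrow> f (Y s0) k) (at s0 within S)"
    by (rule LIM_zero_cancel)
qed

definition picard :: "(nat \<Rightarrow> real) \<Rightarrow> (real \<Rightarrow> nat \<Rightarrow> real) \<Rightarrow> real \<Rightarrow> nat \<Rightarrow> real" where
  "picard x0 Y t k = x0 k + integral {0..t} (\<lambda>s. f (Y s) k)"

lemma integrable_field:
  fixes Y :: "real \<Rightarrow> nat \<Rightarrow> real"
  assumes "\<forall>j<N. continuous_on {0..T} (\<lambda>s. Y s j)" "k < N" "t \<le> T"
  shows "(\<lambda>s. f (Y s) k) integrable_on {0..t}"
  by (rule integrable_continuous_real, rule continuous_on_subset[OF continuous_on_field[OF assms(1,2)]])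
    (use assms(3) in auto)

lemma picard_has_derivative:
  assumes "\<forall>j<N. continuous_on {0..T} (\<lambda>s. Y s j)" "k < N" "t \<in> {0..T}"
  shows "((\<lambda>t. picard x0 Y t k) has_real_derivative f (Y t) k) (at t within {0..T})"
  unfolding picard_def
  using DERIV_add[OF DERIV_const integral_has_real_derivative[OF continuous_on_field[OF assms(1,2)] assms(3)]]
  by simp

lemma picard_dist_le:
  assumes Y: "\<forall>j<N. continuous_on {0..T} (\<lambda>s. Y s j)" and Z: "\<forall>j<N. continuous_on {0..T} (\<lambda>s. Z s j)"
    and k: "k < N" and t: "t \<in> {0..T}"
  shows "\<bar>picard x0 Y t k - picard x0 Z t k\<bar> \<le> Lp * integral {0..t} (\<lambda>s. \<Sum>j<N. \<bar>Y s j - Z s j\<bar>)"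
proof -
  have tT: "t \<le> T" using t by simp
  have "continuous_on {0..T} (\<lambda>s. \<Sum>j<N. \<bar>Y s j - Z s j\<bar>)"
    using Y Z by (intro continuous_intros) auto
  then have int_diff: "(\<lambda>s. \<Sum>j<N. \<bar>Y s j - Z s j\<bar>) integrable_on {0..t}"
    using tT by (intro integrable_continuous_real) (auto elim: continuous_on_subset)
  have "picard x0 Y t k - picard x0 Z t k = integral {0..t} (\<lambda>s. f (Y s) k - f (Z s) k)"
    unfolding picard_def by (simp add: integral_diff integrable_field[OF Y k tT] integrable_field[OF Z k tT])
  also have "norm \<dots> \<le> integral {0..t} (\<lambda>s. Lp * (\<Sum>j<N. \<bar>Y s j - Z s j\<bar>))"
  proof (rule integral_norm_bound_integral)
    show "(\<lambda>s. f (Y s) k - f (Z s) k) integrable_on {0..t}"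
      by (intro integrable_diff integrable_field[OF Y k tT] integrable_field[OF Z k tT])
    show "(\<lambda>s. Lp * (\<Sum>j<N. \<bar>Y s j - Z s j\<bar>)) integrable_on {0..t}"
      using integrable_on_cmult_left[OF int_diff] by simp
    show "norm (f (Y s) k - f (Z s) k) \<le> Lp * (\<Sum>j<N. \<bar>Y s j - Z s j\<bar>)" for s
      using lipschitz[OF k] by simp
  qed
  finally show ?thesis
    by simp
qed

definition picard_iter :: "(nat \<Rightarrow> real) \<Rightarrow> nat \<Rightarrow> real \<Rightarrow> nat \<Rightarrow> real" where
  "picard_iter x0 n = (picard x0 ^^ n) (\<lambda>_. x0)"

lemma picard_iter_Suc: "picard_iter x0 (Suc n) = picard x0 (picard_iter x0 n)"
  by (simp add: picard_iter_def)

lemma picard_iter_continuous: "\<forall>j<N. continuous_on {0..T} (\<lambda>s. picard_iter x0 n s j)"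
proof (induction n)
  case 0
  then show ?case by (simp add: picard_iter_def)
next
  case (Suc n)
  show ?case
    unfolding picard_iter_Suc
    using DERIV_continuous_on[OF picard_has_derivative[OF Suc.IH]] by blast
qed

lemma picard_sum_dist_le_power:
  assumes Y: "\<forall>j<N. continuous_on {0..T} (\<lambda>s. Y s j)" and Z: "\<forall>j<N. continuous_on {0..T} (\<lambda>s. Z s j)"
    and t: "t \<in> {0..T}" and bound: "\<And>s. s \<in> {0..t} \<Longrightarrow> (\<Sum>j<N. \<bar>Y s j - Z s j\<bar>) \<le> C * s ^ n"
  shows "(\<Sum>k<N. \<bar>picard x0 Y t k - picard x0 Z t k\<bar>) \<le> N * Lp * C * t ^ Suc n / Suc n"
proof -
  have "\<bar>picard x0 Y t k - picard x0 Z t k\<bar> \<le> Lp * (C * t ^ Suc n / Suc n)" if k: "k < N" for k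
  proof -
    have "\<bar>picard x0 Y t k - picard x0 Z t k\<bar> \<le> Lp * integral {0..t} (\<lambda>s. \<Sum>j<N. \<bar>Y s j - Z s j\<bar>)"
      by (rule picard_dist_le[OF Y Z k t])
    also have "\<dots> \<le> Lp * integral {0..t} (\<lambda>s. C * s ^ n)"
      using Y Z t bound
      by (intro mult_left_mono integral_le Lp_nonneg integrable_continuous_real continuous_intros)
        (auto intro: continuous_on_subset[of "{0..T}"])
    also have "\<dots> = Lp * (C * t ^ Suc n / Suc n)"
      using t by (simp add: integral_monomial)
    finally show ?thesis .
  qed
  then have "(\<Sum>k<N. \<bar>picard x0 Y t k - picard x0 Z t k\<bar>) \<le> card {..<N} * (Lp * (C * t ^ Suc n / Suc n))"
    by (intro sum_bounded_above) simp
  then show ?thesis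
    by simp
qed

lemma picard_iter_step_bound:
  assumes "t \<in> {0..T}"
  shows "(\<Sum>k<N. \<bar>picard_iter x0 (Suc n) t k - picard_iter x0 n t k\<bar>)
           \<le> T * (\<Sum>k<N. \<bar>f x0 k\<bar>) * (N * Lp * t) ^ n / fact n"
  using assms
proof (induction n arbitrary: t)
  case 0
  have "(\<Sum>k<N. \<bar>picard_iter x0 1 t k - picard_iter x0 0 t k\<bar>) = t * (\<Sum>k<N. \<bar>f x0 k\<bar>)"
    using 0 by (simp add: picard_iter_def picard_def abs_mult sum_distrib_left)
  also have "\<dots> \<le> T * (\<Sum>k<N. \<bar>f x0 k\<bar>)"
    using 0 by (intro mult_right_mono sum_nonneg) auto
  finally show ?case
    by simp
next
  case (Suc n)
  define C where "C = T * (\<Sum>k<N. \<bar>f x0 k\<bar>) * (N * Lp) ^ n / fact n"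
  have "(\<Sum>k<N. \<bar>picard x0 (picard_iter x0 (Suc n)) t k - picard x0 (picard_iter x0 n) t k\<bar>)
        \<le> N * Lp * C * t ^ Suc n / Suc n"
  proof (rule picard_sum_dist_le_power[OF picard_iter_continuous picard_iter_continuous Suc.prems])
    show "(\<Sum>j<N. \<bar>picard_iter x0 (Suc n) s j - picard_iter x0 n s j\<bar>) \<le> C * s ^ n" if "s \<in> {0..t}" for s
      using Suc.IH[of s] that Suc.prems by (simp add: C_def power_mult_distrib)
  qed
  then have "(\<Sum>k<N. \<bar>picard_iter x0 (Suc (Suc n)) t k - picard_iter x0 (Suc n) t k\<bar>) \<le> N * Lp * C * t ^ Suc n / Suc n"
    by (simp only: picard_iter_Suc)
  also have "\<dots> = T * (\<Sum>k<N. \<bar>f x0 k\<bar>) * (N * Lp * t) ^ Suc n / fact (Suc n)"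
    by (simp add: C_def power_mult_distrib field_simps)
  finally show ?case .
qed

lemma picard_iter_uniform_limit:
  assumes "0 \<le> T"
  obtains X where "\<And>k. k < N \<Longrightarrow> uniform_limit {0..T} (\<lambda>n t. picard_iter x0 n t k) (\<lambda>t. X t k) sequentially"
proof -
  define A where "A = T * (\<Sum>k<N. \<bar>f x0 k\<bar>)"
  define M where "M n = A * ((N * Lp * T) ^ n /\<^sub>R fact n)" for n
  have "A \<ge> 0" using assms by (simp add: A_def sum_nonneg)
  have "summable M"
    unfolding M_def by (intro summable_mult summable_exp_generic)
  have bound: "norm (picard_iter x0 (Suc i) t k - picard_iter x0 i t k) \<le> M i"
    if "t \<in> {0..T}" "k < N" for i t k
  proof -
    have "norm (picard_iter x0 (Suc i) t k - picard_iter x0 i t k)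
          \<le> (\<Sum>k<N. \<bar>picard_iter x0 (Suc i) t k - picard_iter x0 i t k\<bar>)"
      unfolding real_norm_def using that(2) by (intro member_le_sum) auto
    also have "\<dots> \<le> A * (N * Lp * t) ^ i / fact i"
      using picard_iter_step_bound[OF that(1)] by (simp add: A_def)
    also have "\<dots> \<le> A * (N * Lp * T) ^ i / fact i"
      using that(1) \<open>A \<ge> 0\<close> Lp_nonneg
      by (intro divide_right_mono mult_left_mono power_mono) auto
    also have "\<dots> = M i"
      by (simp add: M_def field_simps)
    finally show ?thesis .
  qed
  define X where "X t k = x0 k + (\<Sum>i. picard_iter x0 (Suc i) t k - picard_iter x0 i t k)" for t k
  show ?thesis
  proof (rule that)
    fix k assume "k < N"
    have "uniform_limit {0..T} (\<lambda>n t. x0 k + (\<Sum>i<n. picard_iter x0 (Suc i) t k - picard_iter x0 i t k))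
            (\<lambda>t. X t k) sequentially"
      unfolding X_def using bound \<open>k < N\<close> \<open>summable M\<close>
      by (intro uniform_limit_add uniform_limit_const Weierstrass_m_test) auto
    moreover have "x0 k + (\<Sum>i<n. picard_iter x0 (Suc i) t k - picard_iter x0 i t k) = picard_iter x0 n t k"
      for n t
      by (simp add: sum_lessThan_telescope[of "\<lambda>i. picard_iter x0 i t k"]) (simp add: picard_iter_def)
    ultimately show "uniform_limit {0..T} (\<lambda>n t. picard_iter x0 n t k) (\<lambda>t. X t k) sequentially"
      by simp
  qed
qed

lemma picard_limit_fixed_point:
  assumes "0 \<le> T"
    and lim: "\<And>j. j < N \<Longrightarrow> uniform_limit {0..T} (\<lambda>n t. picard_iter x0 n t j) (\<lambda>t. X t j) sequentially"
    and contX: "\<forall>j<N. continuous_on {0..T} (\<lambda>s. X s j)" and k: "k < N" and t: "t \<in> {0..T}"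
  shows "X t k = picard x0 X t k"
proof (rule LIMSEQ_unique)
  show "(\<lambda>n. picard_iter x0 (Suc n) t k) \<longlonglongrightarrow> X t k"
    using tendsto_uniform_limitI[OF lim[OF k] t] by (rule LIMSEQ_Suc)
  show "(\<lambda>n. picard_iter x0 (Suc n) t k) \<longlonglongrightarrow> picard x0 X t k"
  proof (rule tendstoI)
    fix r :: real assume "0 < r"
    define e where "e = r / (Lp * T + 1)"
    have den: "0 < Lp * T + 1"
      using Lp_nonneg assms by (simp add: add_nonneg_pos)
    then have "0 < e"
      using \<open>0 < r\<close> by (simp add: e_def)
    have "Lp * T * e < r"
      using den \<open>0 < r\<close> by (simp add: e_def divide_less_eq distrib_left)
    have "\<forall>\<^sub>F n in sequentially. \<forall>s\<in>{0..T}. (\<Sum>j<N. \<bar>picard_iter x0 n s j - X s j\<bar>) \<le> e"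
      by (rule uniform_limit_sum_abs_le) (use lim \<open>0 < e\<close> in auto)
    then show "\<forall>\<^sub>F n in sequentially. dist (picard_iter x0 (Suc n) t k) (picard x0 X t k) < r"
    proof eventually_elim
      case (elim n)
      have "dist (picard_iter x0 (Suc n) t k) (picard x0 X t k)
            \<le> Lp * integral {0..t} (\<lambda>s. \<Sum>j<N. \<bar>picard_iter x0 n s j - X s j\<bar>)"
        using picard_dist_le[OF picard_iter_continuous contX k t] by (simp add: dist_real_def picard_iter_Suc)
      also have "\<dots> \<le> Lp * integral {0..t} (\<lambda>s. e)"
        using elim t contX picard_iter_continuous[of T x0 n]
        by (intro mult_left_mono integral_le Lp_nonneg integrable_continuous_real continuous_intros)
          (auto intro: continuous_on_subset[of "{0..T}"])
      also have "\<dots> \<le> Lp * T * e"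
        using t \<open>0 < e\<close> Lp_nonneg by (auto simp: mult.assoc intro!: mult_left_mono mult_right_mono)
      finally show ?case
        using \<open>Lp * T * e < r\<close> by linarith
    qed
  qed
qed

theorem global_solution:
  assumes "0 \<le> T"
  obtains X where "\<And>k. k < N \<Longrightarrow> X 0 k = x0 k"
    and "\<And>k t. k < N \<Longrightarrow> t \<in> {0..T} \<Longrightarrow>
           ((\<lambda>s. X s k) has_real_derivative f (X t) k) (at t within {0..T})"
proof -
  obtain X where lim: "\<And>k. k < N \<Longrightarrow> uniform_limit {0..T} (\<lambda>n t. picard_iter x0 n t k) (\<lambda>t. X t k) sequentially"
    using picard_iter_uniform_limit[OF assms] by blast
  have contX: "\<forall>j<N. continuous_on {0..T} (\<lambda>s. X s j)"
  proof (intro allI impI)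
    fix j assume "j < N"
    show "continuous_on {0..T} (\<lambda>s. X s j)"
      by (rule uniform_limit_theorem[OF _ lim[OF \<open>j < N\<close>]])
        (use picard_iter_continuous \<open>j < N\<close> in \<open>auto intro!: always_eventually\<close>)
  qed
  have fixed_point: "X t k = picard x0 X t k" if "k < N" "t \<in> {0..T}" for k t
    by (intro picard_limit_fixed_point[OF assms _ contX that] lim)
  show ?thesis
  proof (rule that)
    show "X 0 k = x0 k" if "k < N" for k
      using fixed_point[OF that] assms by (simp add: picard_def)
    show "((\<lambda>s. X s k) has_real_derivative f (X t) k) (at t within {0..T})"
      if "k < N" "t \<in> {0..T}" for k t
      by (rule has_field_derivative_transform_within[OF picard_has_derivative[OF contX that] zero_less_one that(2)])
        (use fixed_point that in auto)
  qed
qed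

end

section \<open>Initial particle positions\<close>

lemma Sup_sublevel_bounds:
  fixes g :: "real \<Rightarrow> real"
  assumes mono: "mono g" and lip: "\<And>x y. x \<le> y \<Longrightarrow> g y \<le> g x + C * (y - x)" and "0 \<le> C"
    and "g a = 0" and "0 < m" and "m < g b"
  shows "a < Sup {y. g y < m}" and "Sup {y. g y < m} < b" and "g (Sup {y. g y < m}) \<le> m"
proof -
  define S where "S = {y. g y < m}"
  define e where "e = m / (C + 1)"
  have "0 < e" "C * e < m"
    using \<open>0 \<le> C\<close> \<open>0 < m\<close> by (simp_all add: e_def field_simps)
  then have "a + e \<in> S"
    using lip[of a "a + e"] \<open>g a = 0\<close> by (simp add: S_def)
  have below_b: "y < b" if "y \<in> S" for y
    using that \<open>m < g b\<close> monoD[OF mono, of b y] by (force simp: S_def)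
  have bdd: "bdd_above S"
    using below_b by (meson bdd_above.I less_imp_le)
  have "a + e \<le> Sup S"
    by (rule cSup_upper[OF \<open>a + e \<in> S\<close> bdd])
  then show "a < Sup {y. g y < m}"
    using \<open>0 < e\<close> by (simp add: S_def)
  show g_Sup: "g (Sup {y. g y < m}) \<le> m"
  proof (rule ccontr)
    assume "\<not> ?thesis"
    then have gt: "m < g (Sup S)" by (simp add: S_def)
    define d where "d = (g (Sup S) - m) / (C + 1)"
    have "0 < d" "C * d \<le> g (Sup S) - m"
      using gt \<open>0 \<le> C\<close> by (simp_all add: d_def field_simps)
    then obtain z where "z \<in> S" "Sup S - d < z"
      using less_cSupE[of "Sup S - d" S] \<open>a + e \<in> S\<close> by auto
    then have "g (Sup S) \<le> g z + C * d"
      using lip[of "Sup S - d" "Sup S"] monoD[OF mono, of "Sup S - d" z] \<open>0 < d\<close> by simp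
    then show False
      using \<open>z \<in> S\<close> \<open>C * d \<le> g (Sup S) - m\<close> by (simp add: S_def)
  qed
  show "Sup {y. g y < m} < b"
    using g_Sup \<open>m < g b\<close> monoD[OF mono, of b "Sup {y. g y < m}"] by force
qed

lemma esssup_bounded_representative:
  fixes rho :: "real \<Rightarrow> real"
  assumes meas: "rho \<in> borel_measurable lborel" and nonneg: "\<And>y. 0 \<le> rho y"
    and ess: "esssup lborel (\<lambda>y. ereal (rho y)) = ereal M"
  obtains r where "\<And>y. 0 \<le> r y" and "\<And>y. r y \<le> max M 0" and "\<And>a b. r integrable_on {a..b}"
    and "\<And>a b. (LINT y:{a..b}|lborel. rho y) = integral {a..b} r"
proof
  define r where "r y = min (rho y) (max M 0)" for y
  show "0 \<le> r y" "r y \<le> max M 0" for y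
    using nonneg by (auto simp: r_def)
  have "AE y in lborel. rho y \<le> M"
    using esssup_AE[of "\<lambda>y. ereal (rho y)" lborel] ess by simp
  then have ae_eq: "AE y in lborel. rho y = r y"
    by eventually_elim (auto simp: r_def)
  have r_meas: "r \<in> borel_measurable lborel"
    unfolding r_def using meas by measurable
  have set_int: "set_integrable lborel {a..b} r" for a b
  proof (rule set_integrable_bound[OF borel_integrable_atLeastAtMost'[of a b "\<lambda>_. max M 0"]])
    show "set_borel_measurable lborel {a..b} r"
      unfolding set_borel_measurable_def using r_meas by measurable
  qed (use nonneg in \<open>auto simp: r_def\<close>)
  show "r integrable_on {a..b}" for a b
    by (rule set_borel_integral_eq_integral(1)[OF set_int])
  show "(LINT y:{a..b}|lborel. rho y) = integral {a..b} r" for a b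
  proof -
    have "(LINT y:{a..b}|lborel. rho y) = (LINT y:{a..b}|lborel. r y)"
      by (rule set_lebesgue_integral_cong_AE) (use meas r_meas ae_eq in auto)
    also have "\<dots> = integral {a..b} r"
      by (rule set_borel_integral_eq_integral(2)[OF set_int])
    finally show ?thesis .
  qed
qed

lemma integral_upper_endpoint_bounds:
  fixes r :: "real \<Rightarrow> real"
  assumes nonneg: "\<And>y. 0 \<le> r y" and bound: "\<And>y. r y \<le> C" and int: "\<And>a b. r integrable_on {a..b}"
    and "x \<le> y"
  shows "integral {a..x} r \<le> integral {a..y} r" and "integral {a..y} r \<le> integral {a..x} r + C * (y - x)"
proof -
  have piece: "0 \<le> integral {u..v} r \<and> integral {u..v} r \<le> C * (v - u)" if "u \<le> v" for u v
  proof
    show "0 \<le> integral {u..v} r"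
      using int nonneg by (rule integral_nonneg)
    have "integral {u..v} r \<le> integral {u..v} (\<lambda>_. C)"
      using int bound by (intro integral_le) auto
    then show "integral {u..v} r \<le> C * (v - u)"
      using that by (simp add: mult.commute)
  qed
  have "0 \<le> C"
    using nonneg[of 0] bound[of 0] by simp
  have "integral {a..x} r \<le> integral {a..y} r \<and> integral {a..y} r \<le> integral {a..x} r + C * (y - x)"
  proof (cases "a \<le> x")
    case True
    then have "integral {a..y} r = integral {a..x} r + integral {x..y} r"
      using \<open>x \<le> y\<close> int by (simp add: Henstock_Kurzweil_Integration.integral_combine)
    then show ?thesis
      using piece[OF \<open>x \<le> y\<close>] by simp
  next
    case False
    then have "integral {a..x} r = 0" by simp
    moreover have "0 \<le> integral {a..y} r \<and> integral {a..y} r \<le> C * (y - x)"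
      using piece[of a y] \<open>0 \<le> C\<close> False \<open>x \<le> y\<close> mult_left_mono[of "y - a" "y - x" C]
      by (cases "a \<le> y") auto
    ultimately show ?thesis by simp
  qed
  then show "integral {a..x} r \<le> integral {a..y} r" and "integral {a..y} r \<le> integral {a..x} r + C * (y - x)"
    by simp_all
qed

lemma init_pos_step:
  fixes r :: "real \<Rightarrow> real"
  assumes nonneg: "\<And>y. 0 \<le> r y" and bound: "\<And>y. r y \<le> C" and int: "\<And>a b. r integrable_on {a..b}"
    and lint: "\<And>a b. (LINT y:{a..b}|lborel. rho0 y) = integral {a..b} r"
    and mass: "0 < mass_L L rho0" and "Suc k < N"
    and lower: "- L / 2 \<le> init_pos L rho0 N k" and upper: "init_pos L rho0 N k < L / 2"
    and cum: "integral {- L / 2..init_pos L rho0 N k} r \<le> k * mass_L L rho0 / N"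
  shows "init_pos L rho0 N k < init_pos L rho0 N (Suc k)" and "init_pos L rho0 N (Suc k) < L / 2"
    and "integral {- L / 2..init_pos L rho0 N (Suc k)} r \<le> Suc k * mass_L L rho0 / N"
proof -
  define c where "c = mass_L L rho0"
  define a where "a = init_pos L rho0 N k"
  define g where "g y = integral {a..y} r" for y
  have split: "integral {- L / 2..y} r = integral {- L / 2..a} r + g y" if "a \<le> y" for y
    using lower that int by (simp add: g_def a_def Henstock_Kurzweil_Integration.integral_combine)
  have mono: "mono g"
    using integral_upper_endpoint_bounds(1)[OF nonneg bound int] by (auto simp: g_def intro: monoI)
  have lip: "g y \<le> g x + C * (y - x)" if "x \<le> y" for x y
    using integral_upper_endpoint_bounds(2)[OF nonneg bound int that] by (simp add: g_def)
  have "0 \<le> C"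
    using nonneg[of 0] bound[of 0] by simp
  have "g a = 0"
    by (simp add: g_def)
  have "0 < c / N"
    using mass \<open>Suc k < N\<close> by (simp add: c_def)
  have "c / N < g (L / 2)"
  proof -
    have "c = integral {- L / 2..a} r + g (L / 2)"
      using split[of "L / 2"] upper lint by (simp add: c_def mass_L_def a_def)
    then have "(N - real k) * c / N \<le> g (L / 2)"
      using cum \<open>Suc k < N\<close> by (simp add: a_def c_def field_simps)
    moreover have "c / N < (N - real k) * c / N"
      using \<open>Suc k < N\<close> mass by (simp add: c_def divide_strict_right_mono)
    ultimately show ?thesis by linarith
  qed
  note bounds = Sup_sublevel_bounds[OF mono lip \<open>0 \<le> C\<close> \<open>g a = 0\<close> \<open>0 < c / N\<close> \<open>c / N < g (L / 2)\<close>]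
  have succ: "init_pos L rho0 N (Suc k) = Sup {y. g y < c / N}"
    by (simp add: lint g_def c_def a_def)
  show "init_pos L rho0 N k < init_pos L rho0 N (Suc k)" "init_pos L rho0 N (Suc k) < L / 2"
    using bounds(1,2) unfolding succ by (simp_all add: a_def)
  have "integral {- L / 2..init_pos L rho0 N (Suc k)} r \<le> k * c / N + c / N"
    using split[of "Sup {y. g y < c / N}"] bounds(1,3) cum unfolding succ by (simp add: a_def c_def)
  then show "integral {- L / 2..init_pos L rho0 N (Suc k)} r \<le> Suc k * mass_L L rho0 / N"
    by (simp add: c_def add_divide_distrib[symmetric] algebra_simps)
qed

lemma init_pos_increasing:
  assumes L: "0 < L" and meas: "rho0 \<in> borel_measurable lborel" and nonneg: "\<forall>y. 0 \<le> rho0 y"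
    and ess: "esssup lborel (\<lambda>y. ereal (rho0 y)) = ereal M" and mass: "0 < mass_L L rho0" and N: "1 \<le> N"
  shows "\<And>k. Suc k < N \<Longrightarrow> init_pos L rho0 N k < init_pos L rho0 N (Suc k)"
    and "init_pos L rho0 N (N - 1) < init_pos L rho0 N 0 + L"
proof -
  obtain r where r: "\<And>y. 0 \<le> r y" "\<And>y. r y \<le> max M 0" "\<And>a b. r integrable_on {a..b}"
    "\<And>a b. (LINT y:{a..b}|lborel. rho0 y) = integral {a..b} r"
    using esssup_bounded_representative[OF meas _ ess] nonneg by blast
  note step = init_pos_step[OF r mass]
  have inv: "- L / 2 \<le> init_pos L rho0 N k \<and> init_pos L rho0 N k < L / 2 \<and>
      integral {- L / 2..init_pos L rho0 N k} r \<le> k * mass_L L rho0 / N" if "k < N" for k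
    using that
  proof (induction k)
    case 0
    then show ?case using L by simp
  next
    case (Suc k)
    then show ?case
      using step[of k] by force
  qed
  show "\<And>k. Suc k < N \<Longrightarrow> init_pos L rho0 N k < init_pos L rho0 N (Suc k)"
    using step inv by simp
  show "init_pos L rho0 N (N - 1) < init_pos L rho0 N 0 + L"
    using inv[of "N - 1"] N by simp
qed

section \<open>The particle system with truncated interactions\<close>

lemma card_lessThan_Diff_singleton_le: "card ({..<n} - {k}) \<le> n"
  by (simp add: card_Diff_subset_Int le_diff_conv)

lemma linear_minus_quadratic_le:
  fixes F d p :: real
  assumes "0 < p"
  shows "F * d - p * d\<^sup>2 \<le> F\<^sup>2 / (4 * p)"
proof -
  have "0 \<le> p * (d - F / (2 * p))\<^sup>2"
    using assms by simp
  also have "p * (d - F / (2 * p))\<^sup>2 = p * d\<^sup>2 - F * d + F\<^sup>2 / (4 * p)"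
    using assms by (simp add: power2_eq_square field_simps)
  finally show ?thesis
    by simp
qed

lemma lipschitz_on_Icc_of_continuous_deriv:
  fixes f f' :: "real \<Rightarrow> real"
  assumes deriv: "\<And>r. 0 \<le> r \<Longrightarrow> (f has_real_derivative f' r) (at r within {0..})"
    and cont: "continuous_on {0..} f'"
  obtains C where "0 \<le> C" and "\<And>u v. u \<in> {0..R} \<Longrightarrow> v \<in> {0..R} \<Longrightarrow> \<bar>f u - f v\<bar> \<le> C * \<bar>u - v\<bar>"
proof -
  have "compact (f' ` {0..R})"
    by (rule compact_continuous_image[OF continuous_on_subset[OF cont]]) auto
  then obtain C where C: "\<And>z. z \<in> {0..R} \<Longrightarrow> \<bar>f' z\<bar> \<le> C"
    by (fastforce dest: compact_imp_bounded simp: bounded_iff)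
  show ?thesis
  proof (rule that[of "max C 0"])
    fix u v assume "u \<in> {0..R}" "v \<in> {0..R}"
    then have "norm (f u - f v) \<le> max C 0 * norm (u - v)"
      using C deriv
      by (intro field_differentiable_bound[of "{0..R}" f f'])
        (auto intro: DERIV_subset[of _ _ _ "{0..}"] intro: order.trans[OF _ max.cobounded1])
    then show "\<bar>f u - f v\<bar> \<le> max C 0 * \<bar>u - v\<bar>"
      by simp
  qed simp
qed

lemma lipschitz_clamped_outside_zero:
  fixes f f' :: "real \<Rightarrow> real"
  assumes deriv: "\<And>z. z \<noteq> 0 \<Longrightarrow> (f has_real_derivative f' z) (at z)"
    and bound: "\<And>z. z \<noteq> 0 \<Longrightarrow> \<bar>f' z\<bar> \<le> C" and "0 < \<delta>"
  shows "\<bar>f (max u \<delta>) - f (max v \<delta>)\<bar> \<le> C * \<bar>u - v\<bar>"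
    and "\<bar>f (min u (- \<delta>)) - f (min v (- \<delta>))\<bar> \<le> C * \<bar>u - v\<bar>"
proof -
  have "0 \<le> C"
    using bound[of 1] by simp
  have "norm (f (max u \<delta>) - f (max v \<delta>)) \<le> C * norm (max u \<delta> - max v \<delta>)"
    using deriv bound \<open>0 < \<delta>\<close>
    by (intro field_differentiable_bound[of "{\<delta>..}" f f']) (auto intro: has_field_derivative_at_within)
  also have "\<dots> \<le> C * \<bar>u - v\<bar>"
    using \<open>0 \<le> C\<close> by (intro mult_left_mono) auto
  finally show "\<bar>f (max u \<delta>) - f (max v \<delta>)\<bar> \<le> C * \<bar>u - v\<bar>"
    by simp
  have "norm (f (min u (- \<delta>)) - f (min v (- \<delta>))) \<le> C * norm (min u (- \<delta>) - min v (- \<delta>))"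
    using deriv bound \<open>0 < \<delta>\<close>
    by (intro field_differentiable_bound[of "{..- \<delta>}" f f']) (auto intro: has_field_derivative_at_within)
  also have "\<dots> \<le> C * \<bar>u - v\<bar>"
    using \<open>0 \<le> C\<close> by (intro mult_left_mono) auto
  finally show "\<bar>f (min u (- \<delta>)) - f (min v (- \<delta>))\<bar> \<le> C * \<bar>u - v\<bar>"
    by simp
qed

lemma small_with_log_margin:
  fixes a s k Q :: real
  assumes "0 < a" and "0 < s" and "0 < k"
  obtains \<delta> where "0 < \<delta>" and "\<delta> \<le> a" and "\<delta> \<le> s" and "Q < k * (ln s - ln \<delta>)"
proof
  define \<delta> where "\<delta> = min a (s * exp (- (\<bar>Q\<bar> + 1) / k))"
  have "exp (- (\<bar>Q\<bar> + 1) / k) \<le> 1"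
    using \<open>0 < k\<close> by (simp add: divide_nonpos_pos)
  then show "0 < \<delta>" "\<delta> \<le> a" "\<delta> \<le> s"
    using assms by (auto simp: \<delta>_def min_le_iff_disj mult_le_cancel_left1)
  have "ln \<delta> \<le> ln (s * exp (- (\<bar>Q\<bar> + 1) / k))"
    using assms \<open>0 < \<delta>\<close> by (subst ln_le_cancel_iff) (auto simp: \<delta>_def)
  also have "\<dots> = ln s - (\<bar>Q\<bar> + 1) / k"
    using assms by (simp add: ln_mult field_simps)
  finally have "\<bar>Q\<bar> + 1 \<le> k * (ln s - ln \<delta>)"
    using \<open>0 < k\<close> by (simp add: field_simps)
  then show "Q < k * (ln s - ln \<delta>)"
    by linarith
qed

locale particle_model =
  fixes N :: nat and L c :: real and K' K'' phi phi' :: "real \<Rightarrow> real" and B B2 c2 rhobar :: real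
  assumes N_pos: "1 \<le> N" and L_pos: "0 < L" and c_pos: "0 < c"
    and K'_deriv: "\<And>z. z \<noteq> 0 \<Longrightarrow> (K' has_real_derivative K'' z) (at z)"
    and K'_bound: "\<And>z. z \<noteq> 0 \<Longrightarrow> \<bar>K' z\<bar> \<le> B"
    and K''_bound: "\<And>z. z \<noteq> 0 \<Longrightarrow> \<bar>K'' z\<bar> \<le> B2"
    and phi_deriv: "\<And>r. 0 \<le> r \<Longrightarrow> (phi has_real_derivative phi' r) (at r within {0..})"
    and phi'_cont: "continuous_on {0..} phi'"
    and phi_0: "phi 0 = 0" and phi_mono: "strict_mono_on {0..} phi"
    and c2_pos: "0 < c2" and rhobar_pos: "0 < rhobar"
    and phi_large: "\<And>r. rhobar \<le> r \<Longrightarrow> c2 * r \<le> phi r"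
begin

lemma B_nonneg: "0 \<le> B" and B2_nonneg: "0 \<le> B2"
  using K'_bound[of 1] K''_bound[of 1] by simp_all

lemma phi_le: "0 \<le> u \<Longrightarrow> u \<le> v \<Longrightarrow> phi u \<le> phi v"
  using mono_onD[OF strict_mono_on_imp_mono_on[OF phi_mono]] by simp

lemma phi_has_derivative_at:
  assumes "0 < r"
  shows "(phi has_real_derivative phi' r) (at r)"
proof -
  have "(phi has_real_derivative phi' r) (at r within {0<..})"
    using phi_deriv[of r] assms by (auto intro: DERIV_subset)
  moreover have "at r within {0<..} = at r"
    using assms by (intro at_within_open) auto
  ultimately show ?thesis
    by simp
qed

lemma phi_nonneg: "0 \<le> r \<Longrightarrow> 0 \<le> phi r"
  using phi_le[of 0 r] phi_0 by simp

definition next_idx :: "nat \<Rightarrow> nat" where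
  "next_idx k = (if Suc k = N then 0 else Suc k)"

definition gap :: "(nat \<Rightarrow> real) \<Rightarrow> nat \<Rightarrow> real" where
  "gap y k = (if Suc k = N then y 0 + L else y (Suc k)) - y k"

lemma next_idx_less: "k < N \<Longrightarrow> next_idx k < N"
  and prev_idx_less: "k < N \<Longrightarrow> prev_idx N k < N"
  and prev_next_idx: "k < N \<Longrightarrow> prev_idx N (next_idx k) = k"
  and next_prev_idx: "k < N \<Longrightarrow> next_idx (prev_idx N k) = k"
  using N_pos by (auto simp: next_idx_def prev_idx_def)

lemma sum_next_idx: "(\<Sum>k<N. w (next_idx k)) = (\<Sum>k<N. w k)"
  by (rule sum.reindex_bij_witness[of _ "prev_idx N" next_idx])
    (auto simp: next_idx_less prev_idx_less prev_next_idx next_prev_idx)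

lemma sum_gap: "(\<Sum>k<N. gap y k) = L"
proof -
  have "gap y k = y (next_idx k) - y k + (if k = N - 1 then L else 0)" if "k < N" for k
    using that by (auto simp: gap_def next_idx_def)
  then have "(\<Sum>k<N. gap y k) = (\<Sum>k<N. y (next_idx k)) - (\<Sum>k<N. y k) + (\<Sum>k<N. if k = N - 1 then L else 0)"
    by (simp add: sum.distrib sum_subtractf)
  also have "\<dots> = L"
    using N_pos by (simp add: sum_next_idx)
  finally show ?thesis .
qed

lemma gap_dist_le:
  assumes "i < N"
  shows "\<bar>gap y i - gap z i\<bar> \<le> 2 * (\<Sum>j<N. \<bar>y j - z j\<bar>)"
proof -
  have le_sum: "\<bar>y j - z j\<bar> \<le> (\<Sum>j<N. \<bar>y j - z j\<bar>)" if "j < N" for j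
    using that by (intro member_le_sum) auto
  have "\<bar>gap y i - gap z i\<bar> \<le> \<bar>y (next_idx i) - z (next_idx i)\<bar> + \<bar>y i - z i\<bar>"
    by (auto simp: gap_def next_idx_def)
  then show ?thesis
    using le_sum[OF next_idx_less[OF assms]] le_sum[OF assms] by simp
qed

lemma gap_has_derivative:
  assumes sol: "\<And>k t. k < N \<Longrightarrow> t \<in> {0..T} \<Longrightarrow> ((\<lambda>s. X s k) has_real_derivative V t k) (at t within {0..T})"
    and "k < N" and "t \<in> {0..T}"
  shows "((\<lambda>s. gap (X s) k) has_real_derivative V t (next_idx k) - V t k) (at t within {0..T})"
proof (cases "Suc k = N")
  case True
  have "((\<lambda>s. X s 0 + L - X s k) has_real_derivative V t 0 + 0 - V t k) (at t within {0..T})"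
    using assms N_pos by (intro DERIV_diff DERIV_add DERIV_const sol) auto
  then show ?thesis
    using True by (simp add: gap_def next_idx_def)
next
  case False
  have "((\<lambda>s. X s (Suc k) - X s k) has_real_derivative V t (Suc k) - V t k) (at t within {0..T})"
    using assms False by (intro DERIV_diff sol) auto
  then show ?thesis
    using False by (simp add: gap_def next_idx_def)
qed

lemma disc_rho_eq: "disc_rho L c N x k t = c / (N * gap (\<lambda>j. x j t) k)"
  by (simp add: disc_rho_def next_pos_def gap_def)

lemma separation_of_gaps:
  assumes gaps: "\<And>i. i < N \<Longrightarrow> \<delta> \<le> gap y i" and "0 < \<delta>" and "j < k" and "k < N"
  shows "\<delta> \<le> y k - y j"
  using assms(3,4)
proof (induction k)
  case 0
  then show ?case by simp
next
  case (Suc k)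
  have "\<delta> \<le> y (Suc k) - y k"
    using gaps[of k] Suc.prems by (simp add: gap_def)
  then show ?case
    using Suc \<open>0 < \<delta>\<close> by (cases "j = k") auto
qed

text \<open>
  Truncation at distance delta. For ordered particles j < k means x_j < x_k, so the
  clamped kernel and the truncated pressure agree with the original ones as long as
  all gaps are at least delta.
\<close>

definition pressure :: "real \<Rightarrow> real \<Rightarrow> real" where
  "pressure \<delta> g = phi (c / (real N * max g \<delta>))"

definition kernel_trunc :: "real \<Rightarrow> nat \<Rightarrow> nat \<Rightarrow> real \<Rightarrow> real" where
  "kernel_trunc \<delta> k j z = (if j < k then K' (max z \<delta>) else K' (min z (- \<delta>)))"

definition interaction :: "real \<Rightarrow> (nat \<Rightarrow> real) \<Rightarrow> nat \<Rightarrow> real" where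
  "interaction \<delta> y k = - (c / real N) * (\<Sum>j\<in>{..<N} - {k}. kernel_trunc \<delta> k j (y k - y j))"

definition velocity :: "real \<Rightarrow> (nat \<Rightarrow> real) \<Rightarrow> nat \<Rightarrow> real" where
  "velocity \<delta> y k = interaction \<delta> y k - (real N / c) * (pressure \<delta> (gap y k) - pressure \<delta> (gap y (prev_idx N k)))"

definition potential :: "real \<Rightarrow> real \<Rightarrow> real" where
  "potential \<delta> = (SOME G. \<forall>g. (G has_real_derivative - pressure \<delta> g) (at g))"

definition energy :: "real \<Rightarrow> (nat \<Rightarrow> real) \<Rightarrow> real" where
  "energy \<delta> y = (\<Sum>k<N. potential \<delta> (gap y k))"

context
  fixes \<delta> :: real
  assumes \<delta>_pos: "0 < \<delta>"
begin

lemma pressure_nonneg: "0 \<le> pressure \<delta> g"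
  using c_pos \<delta>_pos by (simp add: pressure_def phi_nonneg)

lemma pressure_antimono: "u \<le> v \<Longrightarrow> pressure \<delta> v \<le> pressure \<delta> u"
  unfolding pressure_def using c_pos N_pos \<delta>_pos
  by (intro phi_le) (auto intro!: divide_left_mono mult_left_mono mult_pos_pos)

lemma pressure_eq: "\<delta> \<le> g \<Longrightarrow> pressure \<delta> g = phi (c / (real N * g))"
  by (simp add: pressure_def)

lemma isCont_pressure: "isCont (pressure \<delta>) g"
proof -
  have "isCont phi (c / (real N * max g \<delta>))"
    by (rule DERIV_isCont[OF phi_has_derivative_at]) (use c_pos N_pos \<delta>_pos in simp)
  moreover have "isCont (\<lambda>g. c / (real N * max g \<delta>)) g"
    using N_pos \<delta>_pos by (intro continuous_intros) auto
  ultimately show ?thesis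
    unfolding pressure_def by (rule isCont_o2[rotated])
qed

lemma pressure_lipschitz:
  obtains C where "0 \<le> C" and "\<And>u v. \<bar>pressure \<delta> u - pressure \<delta> v\<bar> \<le> C * \<bar>u - v\<bar>"
proof -
  define R where "R = c / (N * \<delta>)"
  obtain Cphi where "0 \<le> Cphi" and Cphi: "\<And>u v. u \<in> {0..R} \<Longrightarrow> v \<in> {0..R} \<Longrightarrow> \<bar>phi u - phi v\<bar> \<le> Cphi * \<bar>u - v\<bar>"
    using lipschitz_on_Icc_of_continuous_deriv[OF phi_deriv phi'_cont] by blast
  have density_range: "c / (N * max g \<delta>) \<in> {0..R}" for g
    using c_pos N_pos \<delta>_pos unfolding R_def
    by (auto intro!: divide_left_mono mult_left_mono mult_pos_pos)
  have density_lipschitz: "\<bar>c / (N * max u \<delta>) - c / (N * max v \<delta>)\<bar> \<le> R / \<delta> * \<bar>u - v\<bar>" for u v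
  proof -
    define mu mv where "mu = max u \<delta>" and "mv = max v \<delta>"
    have "\<delta> \<le> mu" "\<delta> \<le> mv" "\<bar>mv - mu\<bar> \<le> \<bar>u - v\<bar>"
      by (auto simp: mu_def mv_def)
    have "c / (N * mu) - c / (N * mv) = R * \<delta> * ((mv - mu) / (mu * mv))"
      using \<open>\<delta> \<le> mu\<close> \<open>\<delta> \<le> mv\<close> \<delta>_pos N_pos by (simp add: R_def field_simps)
    then have "\<bar>c / (N * mu) - c / (N * mv)\<bar> = R * \<delta> * (\<bar>mv - mu\<bar> / (mu * mv))"
      using \<open>\<delta> \<le> mu\<close> \<open>\<delta> \<le> mv\<close> \<delta>_pos c_pos by (simp add: R_def abs_mult)
    also have "\<dots> \<le> R * \<delta> * (\<bar>u - v\<bar> / (\<delta> * \<delta>))"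
      using \<open>\<delta> \<le> mu\<close> \<open>\<delta> \<le> mv\<close> \<open>\<bar>mv - mu\<bar> \<le> \<bar>u - v\<bar>\<close> \<delta>_pos c_pos
      by (intro mult_left_mono frac_le mult_mono) (auto simp: R_def)
    also have "\<dots> = R / \<delta> * \<bar>u - v\<bar>"
      using \<delta>_pos by simp
    finally show ?thesis
      by (simp add: mu_def mv_def)
  qed
  show ?thesis
  proof (rule that[of "Cphi * (R / \<delta>)"])
    show "0 \<le> Cphi * (R / \<delta>)"
      using \<open>0 \<le> Cphi\<close> c_pos \<delta>_pos by (simp add: R_def)
    fix u v
    have "\<bar>pressure \<delta> u - pressure \<delta> v\<bar> \<le> Cphi * \<bar>c / (N * max u \<delta>) - c / (N * max v \<delta>)\<bar>"
      unfolding pressure_def using density_range by (intro Cphi)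
    also have "\<dots> \<le> Cphi * (R / \<delta> * \<bar>u - v\<bar>)"
      by (intro mult_left_mono density_lipschitz \<open>0 \<le> Cphi\<close>)
    finally show "\<bar>pressure \<delta> u - pressure \<delta> v\<bar> \<le> Cphi * (R / \<delta>) * \<bar>u - v\<bar>"
      by simp
  qed
qed

lemma kernel_trunc_bound: "\<bar>kernel_trunc \<delta> k j z\<bar> \<le> B"
  using K'_bound \<delta>_pos by (auto simp: kernel_trunc_def)

lemma kernel_trunc_lipschitz: "\<bar>kernel_trunc \<delta> k j u - kernel_trunc \<delta> k j v\<bar> \<le> B2 * \<bar>u - v\<bar>"
  using lipschitz_clamped_outside_zero[OF K'_deriv K''_bound \<delta>_pos] by (simp add: kernel_trunc_def)

lemma interaction_bound: "\<bar>interaction \<delta> y k\<bar> \<le> c * B"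
proof -
  have "\<bar>\<Sum>j\<in>{..<N} - {k}. kernel_trunc \<delta> k j (y k - y j)\<bar> \<le> (\<Sum>j\<in>{..<N} - {k}. \<bar>kernel_trunc \<delta> k j (y k - y j)\<bar>)"
    by (rule sum_abs)
  also have "\<dots> \<le> card ({..<N} - {k}) * B"
    by (rule sum_bounded_above) (rule kernel_trunc_bound)
  also have "\<dots> \<le> N * B"
    using B_nonneg card_lessThan_Diff_singleton_le[of N k] by (intro mult_right_mono) auto
  finally have "c / N * \<bar>\<Sum>j\<in>{..<N} - {k}. kernel_trunc \<delta> k j (y k - y j)\<bar> \<le> c / N * (N * B)"
    using c_pos by (intro mult_left_mono) auto
  then show ?thesis
    using c_pos N_pos by (simp add: interaction_def abs_mult)
qed

lemma interaction_lipschitz: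
  assumes "k < N"
  shows "\<bar>interaction \<delta> y k - interaction \<delta> z k\<bar> \<le> 2 * c * B2 * (\<Sum>j<N. \<bar>y j - z j\<bar>)"
proof -
  define S where "S = (\<Sum>j<N. \<bar>y j - z j\<bar>)"
  have le_S: "\<bar>y j - z j\<bar> \<le> S" if "j < N" for j
    using that unfolding S_def by (intro member_le_sum) auto
  have term_le: "\<bar>kernel_trunc \<delta> k j (y k - y j) - kernel_trunc \<delta> k j (z k - z j)\<bar> \<le> B2 * (2 * S)"
    if "j \<in> {..<N} - {k}" for j
  proof -
    have "\<bar>(y k - y j) - (z k - z j)\<bar> \<le> 2 * S"
      using le_S[OF assms] le_S[of j] that by simp
    then show ?thesis
      using kernel_trunc_lipschitz[of k j "y k - y j" "z k - z j"] B2_nonneg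
      by (meson mult_left_mono order.trans)
  qed
  define D where "D = (\<Sum>j\<in>{..<N} - {k}. kernel_trunc \<delta> k j (y k - y j) - kernel_trunc \<delta> k j (z k - z j))"
  have "\<bar>D\<bar> \<le> (\<Sum>j\<in>{..<N} - {k}. \<bar>kernel_trunc \<delta> k j (y k - y j) - kernel_trunc \<delta> k j (z k - z j)\<bar>)"
    unfolding D_def by (rule sum_abs)
  also have "\<dots> \<le> card ({..<N} - {k}) * (B2 * (2 * S))"
    by (rule sum_bounded_above) (rule term_le)
  also have "\<dots> \<le> N * (B2 * (2 * S))"
    using B2_nonneg card_lessThan_Diff_singleton_le[of N k] by (intro mult_right_mono) (auto simp: S_def sum_nonneg)
  finally have "c / N * \<bar>D\<bar> \<le> c / N * (N * (B2 * (2 * S)))"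
    using c_pos by (intro mult_left_mono) auto
  moreover have "interaction \<delta> y k - interaction \<delta> z k = - (c / N) * D"
    by (simp add: interaction_def D_def sum_subtractf right_diff_distrib)
  ultimately show ?thesis
    using c_pos N_pos by (simp add: abs_mult S_def)
qed

lemma velocity_lipschitz:
  obtains Lp where "lipschitz_field N (velocity \<delta>) Lp"
proof -
  obtain Cp where "0 \<le> Cp" and Cp: "\<And>u v. \<bar>pressure \<delta> u - pressure \<delta> v\<bar> \<le> Cp * \<bar>u - v\<bar>"
    using pressure_lipschitz by blast
  define Lp where "Lp = 2 * c * B2 + 4 * N * Cp / c"
  have "\<bar>velocity \<delta> y k - velocity \<delta> z k\<bar> \<le> Lp * (\<Sum>j<N. \<bar>y j - z j\<bar>)" if "k < N" for y z k
  proof -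
    define S where "S = (\<Sum>j<N. \<bar>y j - z j\<bar>)"
    have pressure_gap: "\<bar>pressure \<delta> (gap y i) - pressure \<delta> (gap z i)\<bar> \<le> Cp * (2 * S)" if "i < N" for i
      using Cp[of "gap y i" "gap z i"] gap_dist_le[OF that, of y z] \<open>0 \<le> Cp\<close>
      unfolding S_def by (meson mult_left_mono order.trans)
    have "\<bar>velocity \<delta> y k - velocity \<delta> z k\<bar> \<le> \<bar>interaction \<delta> y k - interaction \<delta> z k\<bar>
          + N / c * (\<bar>pressure \<delta> (gap y k) - pressure \<delta> (gap z k)\<bar>
                     + \<bar>pressure \<delta> (gap y (prev_idx N k)) - pressure \<delta> (gap z (prev_idx N k))\<bar>)"
    proof -
      have triangle: "\<bar>a - w * (d - e)\<bar> \<le> \<bar>a\<bar> + w * (\<bar>d\<bar> + \<bar>e\<bar>)" if "0 \<le> w" for a w d e :: real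
        using that abs_triangle_ineq4[of d e] mult_left_mono[of "\<bar>d - e\<bar>" _ w]
        by (simp add: abs_mult order.trans[OF abs_triangle_ineq4])
      have "velocity \<delta> y k - velocity \<delta> z k = (interaction \<delta> y k - interaction \<delta> z k)
          - N / c * ((pressure \<delta> (gap y k) - pressure \<delta> (gap z k))
                     - (pressure \<delta> (gap y (prev_idx N k)) - pressure \<delta> (gap z (prev_idx N k))))"
        by (simp add: velocity_def algebra_simps)
      then show ?thesis
        using triangle[of "N / c"] c_pos by simp
    qed
    also have "\<dots> \<le> 2 * c * B2 * S + N / c * (Cp * (2 * S) + Cp * (2 * S))"
      using interaction_lipschitz[OF that] pressure_gap[OF that] pressure_gap[OF prev_idx_less[OF that]] c_pos
      by (intro add_mono mult_left_mono) (auto simp: S_def)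
    also have "\<dots> = Lp * S"
      using c_pos by (simp add: Lp_def field_simps)
    finally show ?thesis
      by (simp add: S_def)
  qed
  moreover have "0 \<le> Lp"
    using c_pos B2_nonneg \<open>0 \<le> Cp\<close> by (simp add: Lp_def)
  ultimately show ?thesis
    by (intro that) (unfold_locales; blast)
qed

lemma energy_production_le:
  "(\<Sum>k<N. - pressure \<delta> (gap y k) * (velocity \<delta> y (next_idx k) - velocity \<delta> y k)) \<le> c * (c * B)\<^sup>2 / 4"
proof -
  define v where "v = velocity \<delta> y"
  define h where "h k = pressure \<delta> (gap y k)" for k
  define d where "d k = h k - h (prev_idx N k)" for k
  have shift: "(\<Sum>k<N. h k * v (next_idx k)) = (\<Sum>k<N. h (prev_idx N k) * v k)"
  proof -
    have "(\<Sum>k<N. h k * v (next_idx k)) = (\<Sum>k<N. h (prev_idx N (next_idx k)) * v (next_idx k))"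
      by (simp add: prev_next_idx)
    also have "\<dots> = (\<Sum>k<N. h (prev_idx N k) * v k)"
      by (rule sum_next_idx)
    finally show ?thesis .
  qed
  have "(\<Sum>k<N. - h k * (v (next_idx k) - v k)) = (\<Sum>k<N. v k * d k)"
    by (simp add: algebra_simps sum_subtractf shift d_def)
  also have "\<dots> = (\<Sum>k<N. interaction \<delta> y k * d k - (N / c) * (d k)\<^sup>2)"
    by (simp add: v_def velocity_def d_def h_def power2_eq_square algebra_simps)
  also have "\<dots> \<le> (\<Sum>k<N. (interaction \<delta> y k)\<^sup>2 / (4 * (N / c)))"
    using c_pos N_pos by (intro sum_mono linear_minus_quadratic_le) simp
  also have "\<dots> \<le> (\<Sum>k<N. (c * B)\<^sup>2 / (4 * (N / c)))"
    using interaction_bound c_pos N_pos B_nonneg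
    by (intro sum_mono divide_right_mono) (auto simp flip: abs_le_square_iff)
  also have "\<dots> = c * (c * B)\<^sup>2 / 4"
    using c_pos N_pos by (simp add: field_simps)
  finally show ?thesis
    by (simp add: v_def h_def)
qed

lemma potential_has_derivative: "(potential \<delta> has_real_derivative - pressure \<delta> g) (at g)"
proof -
  obtain G where "\<And>g. (G has_vector_derivative - pressure \<delta> g) (at g)"
    using einterval_antiderivative[of "-\<infinity>" "\<infinity>" "\<lambda>g. - pressure \<delta> g"] isCont_pressure by force
  then have "\<exists>G. \<forall>g. (G has_real_derivative - pressure \<delta> g) (at g)"
    by (auto simp: has_real_derivative_iff_has_vector_derivative)
  then show ?thesis
    unfolding potential_def by (rule someI_ex[where P = "\<lambda>G. \<forall>g. (G has_real_derivative - pressure \<delta> g) (at g)", THEN spec])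
qed

lemma potential_above_tangent: "potential \<delta> a - pressure \<delta> a * (g - a) \<le> potential \<delta> g"
proof -
  have "convex_on UNIV (potential \<delta>)"
    using potential_has_derivative pressure_antimono
    by (intro convex_on_realI[where f' = "\<lambda>g. - pressure \<delta> g"]) auto
  from convex_on_imp_above_tangent[OF this, of a g, OF _ _ _ potential_has_derivative[of a]]
  show ?thesis
    by simp
qed

lemma energy_growth:
  assumes sol: "\<And>k t. k < N \<Longrightarrow> t \<in> {0..T} \<Longrightarrow>
      ((\<lambda>s. X s k) has_real_derivative velocity \<delta> (X t) k) (at t within {0..T})"
    and t: "t \<in> {0..T}"
  shows "energy \<delta> (X t) \<le> energy \<delta> (X 0) + c * (c * B)\<^sup>2 / 4 * t"
proof -
  define Cst where "Cst = c * (c * B)\<^sup>2 / 4"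
  define E where "E = (\<lambda>s. energy \<delta> (X s) - Cst * s)"
  define E' where "E' s = (\<Sum>k<N. - pressure \<delta> (gap (X s) k) * (velocity \<delta> (X s) (next_idx k) - velocity \<delta> (X s) k)) - Cst" for s
  have deriv: "(E has_real_derivative E' s) (at s within {0..T})" if "s \<in> {0..T}" for s
  proof -
    have "((\<lambda>s. energy \<delta> (X s)) has_real_derivative
        (\<Sum>k<N. - pressure \<delta> (gap (X s) k) * (velocity \<delta> (X s) (next_idx k) - velocity \<delta> (X s) k)))
        (at s within {0..T})"
      unfolding energy_def
      by (rule DERIV_sum, rule DERIV_chain2[OF potential_has_derivative gap_has_derivative[OF sol]])
        (use that in auto)
    from DERIV_diff[OF this DERIV_cmult[OF DERIV_ident, of Cst]] show ?thesis
      by (simp add: E_def E'_def)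
  qed
  have "E t \<le> E 0"
  proof (rule DERIV_nonpos_imp_decreasing_open[of 0 t E])
    show "0 \<le> t" using t by simp
    show "\<exists>y. (E has_real_derivative y) (at x) \<and> y \<le> 0" if "0 < x" "x < t" for x
    proof (intro exI conjI)
      have "at x within {0..T} = at x"
        using that t by (intro at_within_Icc_at) auto
      then show "(E has_real_derivative E' x) (at x)"
        using deriv[of x] that t by simp
      show "E' x \<le> 0"
        using energy_production_le by (simp add: E'_def Cst_def)
    qed
    show "continuous_on {0..t} E"
      using t by (intro continuous_on_subset[OF DERIV_continuous_on[OF deriv]]) auto
  qed
  then show ?thesis
    by (simp add: E_def Cst_def)
qed

lemma potential_excess_le_energy:
  assumes "k < N"
  shows "potential \<delta> (gap y k) - potential \<delta> (L / N) + pressure \<delta> (L / N) * (gap y k - L / N)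
           \<le> energy \<delta> y - N * potential \<delta> (L / N)"
proof -
  define excess where "excess j = potential \<delta> (gap y j) - potential \<delta> (L / N) + pressure \<delta> (L / N) * (gap y j - L / N)" for j
  have "0 \<le> excess j" for j
    using potential_above_tangent[of "L / N" "gap y j"] by (simp add: excess_def)
  then have "excess k \<le> (\<Sum>j<N. excess j)"
    using assms by (intro member_le_sum) auto
  also have "\<dots> = energy \<delta> y - N * potential \<delta> (L / N) + pressure \<delta> (L / N) * ((\<Sum>j<N. gap y j) - N * (L / N))"
    by (simp add: excess_def energy_def sum.distrib sum_subtractf sum_distrib_left right_diff_distrib)
  also have "\<dots> = energy \<delta> y - N * potential \<delta> (L / N)"
    using N_pos by (simp add: sum_gap)
  finally show ?thesis
    by (simp add: excess_def)
qed

lemma potential_log_growth: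
  assumes "\<delta> \<le> c / (N * rhobar)"
  shows "potential \<delta> (c / (N * rhobar)) + c2 * c / N * (ln (c / (N * rhobar)) - ln \<delta>) \<le> potential \<delta> \<delta>"
proof -
  define s1 where "s1 = c / (N * rhobar)"
  define F where "F = (\<lambda>g. potential \<delta> g + c2 * c / N * ln g)"
  have deriv: "(F has_real_derivative - pressure \<delta> x + c2 * c / N * inverse x) (at x)" if "0 < x" for x
    unfolding F_def by (intro DERIV_add potential_has_derivative DERIV_cmult DERIV_ln that)
  have "F s1 \<le> F \<delta>"
  proof (rule DERIV_nonpos_imp_decreasing_open[of \<delta> s1 F])
    show "\<delta> \<le> s1" using assms by (simp add: s1_def)
    show "\<exists>y. (F has_real_derivative y) (at x) \<and> y \<le> 0" if "\<delta> < x" "x < s1" for x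
    proof (intro exI conjI)
      show "(F has_real_derivative - pressure \<delta> x + c2 * c / N * inverse x) (at x)"
        using that \<delta>_pos by (intro deriv) simp
      have "rhobar \<le> c / (N * x)"
        using that \<delta>_pos N_pos rhobar_pos by (simp add: s1_def field_simps)
      then have "c2 * (c / (N * x)) \<le> phi (c / (N * x))"
        by (rule phi_large)
      then have "c2 * (c / (N * x)) \<le> pressure \<delta> x"
        using that by (simp add: pressure_eq)
      then show "- pressure \<delta> x + c2 * c / N * inverse x \<le> 0"
        by (simp add: field_simps)
    qed
    show "continuous_on {\<delta>..s1} F"
      using deriv \<delta>_pos
      by (intro DERIV_continuous_on[where D = "\<lambda>x. - pressure \<delta> x + c2 * c / N * inverse x"])
        (auto intro: has_field_derivative_at_within)
  qed
  then show ?thesis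
    by (simp add: F_def s1_def algebra_simps)
qed

lemma potential_excess_large:
  assumes "g \<le> \<delta>" and "\<delta> \<le> L / N" and "\<delta> \<le> c / (N * rhobar)"
  shows "c2 * c / N * (ln (c / (N * rhobar)) - ln \<delta>) - phi (c / L) * (c / (N * rhobar))
           \<le> potential \<delta> g - potential \<delta> (L / N) + pressure \<delta> (L / N) * (g - L / N)"
proof -
  define a s1 where "a = L / N" and "s1 = c / (N * rhobar)"
  have pa: "pressure \<delta> a = phi (c / L)"
    using assms(2) N_pos by (simp add: pressure_eq a_def)
  have "potential \<delta> \<delta> - pressure \<delta> \<delta> * (g - \<delta>) \<le> potential \<delta> g"
    by (rule potential_above_tangent)
  moreover have "potential \<delta> a - pressure \<delta> a * (s1 - a) \<le> potential \<delta> s1"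
    by (rule potential_above_tangent)
  moreover have "potential \<delta> s1 + c2 * c / N * (ln s1 - ln \<delta>) \<le> potential \<delta> \<delta>"
    using potential_log_growth assms(3) by (simp add: s1_def)
  moreover have "0 \<le> (pressure \<delta> a - pressure \<delta> \<delta>) * (g - \<delta>)"
    using pressure_antimono[of \<delta> a] assms by (intro mult_nonpos_nonpos) (auto simp: a_def)
  moreover have "pressure \<delta> a * (s1 - \<delta>) \<le> pressure \<delta> a * s1"
    using pressure_nonneg \<delta>_pos by (simp add: mult_left_mono)
  ultimately show ?thesis
    unfolding a_def[symmetric] s1_def[symmetric] pa[symmetric] by (simp add: algebra_simps)
qed

lemma initial_energy_le:
  fixes gmin :: real
  assumes "0 < gmin" and "\<delta> \<le> gmin" and gaps: "\<And>k. k < N \<Longrightarrow> gmin \<le> gap y k"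
  shows "energy \<delta> y - N * potential \<delta> (L / N) \<le> L * phi (c / (N * gmin))"
proof -
  define a P0 where "a = L / N" and "P0 = phi (c / (N * gmin))"
  have "0 < a" "0 \<le> P0"
    using L_pos N_pos c_pos \<open>0 < gmin\<close> by (simp_all add: a_def P0_def phi_nonneg)
  have "potential \<delta> (gap y k) - potential \<delta> a \<le> a * P0" if "k < N" for k
  proof -
    define g where "g = gap y k"
    have "potential \<delta> g - potential \<delta> a \<le> pressure \<delta> g * (a - g)"
      using potential_above_tangent[of g a] by simp
    also have "\<dots> \<le> a * P0"
    proof (cases "a \<le> g")
      case True
      then have "pressure \<delta> g * (a - g) \<le> 0"
        using pressure_nonneg[of g] by (simp add: mult_nonneg_nonpos)
      then show ?thesis
        using \<open>0 < a\<close> \<open>0 \<le> P0\<close> by (meson order.trans zero_le_mult_iff less_imp_le)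
    next
      case False
      have "pressure \<delta> g \<le> pressure \<delta> gmin"
        using gaps[OF that] by (intro pressure_antimono) (simp add: g_def)
      also have "\<dots> = P0"
        using \<open>\<delta> \<le> gmin\<close> by (simp add: pressure_eq P0_def)
      finally have "pressure \<delta> g * (a - g) \<le> P0 * (a - g)"
        using False by (intro mult_right_mono) auto
      also have "\<dots> \<le> P0 * a"
        using gaps[OF that] \<open>0 < gmin\<close> \<open>0 \<le> P0\<close> by (intro mult_left_mono) (auto simp: g_def)
      finally show ?thesis
        by (simp add: mult.commute)
    qed
    finally show ?thesis
      by (simp add: g_def)
  qed
  then have "energy \<delta> y - N * potential \<delta> a \<le> N * (a * P0)"
    using sum_bounded_above[of "{..<N}" "\<lambda>k. potential \<delta> (gap y k) - potential \<delta> a"]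
    by (simp add: energy_def sum_subtractf)
  then show ?thesis
    using N_pos by (simp add: a_def P0_def)
qed

lemma velocity_eq_untruncated:
  assumes gaps: "\<And>i. i < N \<Longrightarrow> \<delta> \<le> gap y i" and "k < N"
  shows "velocity \<delta> y k = - (c / N) * (\<Sum>j\<in>{..<N} - {k}. K' (y k - y j))
           - (N / c) * (phi (c / (N * gap y k)) - phi (c / (N * gap y (prev_idx N k))))"
proof -
  have "kernel_trunc \<delta> k j (y k - y j) = K' (y k - y j)" if "j \<in> {..<N} - {k}" for j
  proof (cases "j < k")
    case True
    then show ?thesis
      using separation_of_gaps[OF gaps \<delta>_pos True \<open>k < N\<close>] by (simp add: kernel_trunc_def)
  next
    case False
    then have "k < j" using that by auto
    then show ?thesis
      using separation_of_gaps[OF gaps \<delta>_pos \<open>k < j\<close>] that False by (simp add: kernel_trunc_def)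
  qed
  then show ?thesis
    using gaps[OF \<open>k < N\<close>] gaps[OF prev_idx_less[OF \<open>k < N\<close>]]
    by (simp add: velocity_def interaction_def pressure_eq)
qed

lemma gaps_stay_above:
  fixes gmin :: real
  assumes sol: "\<And>k t. k < N \<Longrightarrow> t \<in> {0..T} \<Longrightarrow>
      ((\<lambda>s. X s k) has_real_derivative velocity \<delta> (X t) k) (at t within {0..T})"
    and "0 < gmin" and "\<delta> \<le> gmin" and "\<And>k. k < N \<Longrightarrow> gmin \<le> gap (X 0) k"
    and "\<delta> \<le> L / N" and "\<delta> \<le> c / (N * rhobar)"
    and margin: "L * phi (c / (N * gmin)) + c * (c * B)\<^sup>2 / 4 * T
       < c2 * c / N * (ln (c / (N * rhobar)) - ln \<delta>) - phi (c / L) * (c / (N * rhobar))"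
    and t: "t \<in> {0..T}" and "k < N"
  shows "\<delta> < gap (X t) k"
proof (rule ccontr)
  assume "\<not> \<delta> < gap (X t) k"
  then have "c2 * c / N * (ln (c / (N * rhobar)) - ln \<delta>) - phi (c / L) * (c / (N * rhobar))
      \<le> potential \<delta> (gap (X t) k) - potential \<delta> (L / N) + pressure \<delta> (L / N) * (gap (X t) k - L / N)"
    using assms by (intro potential_excess_large) auto
  also have "\<dots> \<le> energy \<delta> (X t) - N * potential \<delta> (L / N)"
    using \<open>k < N\<close> by (rule potential_excess_le_energy)
  also have "\<dots> \<le> energy \<delta> (X 0) - N * potential \<delta> (L / N) + c * (c * B)\<^sup>2 / 4 * t"
    using energy_growth[OF sol t] by simp
  also have "\<dots> \<le> L * phi (c / (N * gmin)) + c * (c * B)\<^sup>2 / 4 * T"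
    using initial_energy_le[OF assms(2-4)] t c_pos by (intro add_mono mult_left_mono) auto
  finally show False
    using margin by linarith
qed

end

lemma gap_cong: "(\<And>j. j < N \<Longrightarrow> y j = z j) \<Longrightarrow> k < N \<Longrightarrow> gap y k = gap z k"
  using N_pos by (auto simp: gap_def)

lemma truncated_solution_keeps_gaps:
  fixes gmin :: real
  assumes "0 < gmin" and gmin_le: "\<And>k. k < N \<Longrightarrow> gmin \<le> gap x0 k"
  obtains \<delta> X where "0 < \<delta>" and "\<And>k. k < N \<Longrightarrow> X 0 k = x0 k"
    and "\<And>k t. k < N \<Longrightarrow> t \<in> {0..1} \<Longrightarrow>
      ((\<lambda>s. X s k) has_real_derivative velocity \<delta> (X t) k) (at t within {0..1})"
    and "\<And>k t. k < N \<Longrightarrow> t \<in> {0..1} \<Longrightarrow> \<delta> < gap (X t) k"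
proof -
  define s1 where "s1 = c / (N * rhobar)"
  define Q where "Q = L * phi (c / (N * gmin)) + c * (c * B)\<^sup>2 / 4 * 1 + phi (c / L) * s1"
  obtain \<delta> where "0 < \<delta>" and "\<delta> \<le> min gmin (L / N)" and "\<delta> \<le> s1"
    and margin: "Q < c2 * c / N * (ln s1 - ln \<delta>)"
    using small_with_log_margin[of "min gmin (L / N)" s1 "c2 * c / N" Q] \<open>0 < gmin\<close>
      L_pos N_pos c_pos c2_pos rhobar_pos by (auto simp: s1_def)
  obtain Lp where "lipschitz_field N (velocity \<delta>) Lp"
    using velocity_lipschitz[OF \<open>0 < \<delta>\<close>] by blast
  then obtain X where X0: "\<And>k. k < N \<Longrightarrow> X 0 k = x0 k"
    and sol: "\<And>k t. k < N \<Longrightarrow> t \<in> {0..1} \<Longrightarrow>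
      ((\<lambda>s. X s k) has_real_derivative velocity \<delta> (X t) k) (at t within {0..1})"
    using lipschitz_field.global_solution[of N "velocity \<delta>" Lp 1 x0] by auto
  show ?thesis
  proof (rule that[OF \<open>0 < \<delta>\<close> X0 sol])
    show "\<delta> < gap (X t) k" if "k < N" "t \<in> {0..1}" for k t
    proof (rule gaps_stay_above[OF \<open>0 < \<delta>\<close> sol \<open>0 < gmin\<close>])
      show "gmin \<le> gap (X 0) k" if "k < N" for k
        using gmin_le[OF that] gap_cong[OF X0 that] by simp
    qed (use \<open>\<delta> \<le> min gmin (L / N)\<close> \<open>\<delta> \<le> s1\<close> margin that in \<open>auto simp: Q_def s1_def\<close>)
  qed
qed

theorem ordered_solution_exists:
  assumes ordered: "\<And>k. Suc k < N \<Longrightarrow> x0 k < x0 (Suc k)" and wrap: "x0 (N - 1) < x0 0 + L"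
  shows "\<exists>x. (\<forall>k<N. x k 0 = x0 k) \<and> (\<forall>t\<in>{0..<1}. \<forall>k. Suc k < N \<longrightarrow> x k t < x (Suc k) t) \<and>
    (\<forall>k<N. \<forall>t\<in>{0..<1}. ((\<lambda>s. x k s) has_real_derivative
       - (c / real N) * (\<Sum>j\<in>{..<N} - {k}. K' (x k t - x j t))
       - (real N / c) * (phi (disc_rho L c N x k t) - phi (disc_rho L c N x (prev_idx N k) t)))
       (at t within {0..<1}))"
proof -
  have "0 < gap x0 k" if "k < N" for k
    using that ordered[of k] wrap by (cases "Suc k = N") (auto simp: gap_def)
  then have "0 < Min (gap x0 ` {..<N})"
    using N_pos by (subst Min_gr_iff) (auto simp: lessThan_empty_iff)
  moreover have "Min (gap x0 ` {..<N}) \<le> gap x0 k" if "k < N" for k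
    using that by simp
  ultimately obtain \<delta> X where "0 < \<delta>" and X0: "\<And>k. k < N \<Longrightarrow> X 0 k = x0 k"
    and sol: "\<And>k t. k < N \<Longrightarrow> t \<in> {0..1} \<Longrightarrow>
      ((\<lambda>s. X s k) has_real_derivative velocity \<delta> (X t) k) (at t within {0..1})"
    and gaps: "\<And>k t. k < N \<Longrightarrow> t \<in> {0..1} \<Longrightarrow> \<delta> < gap (X t) k"
    using truncated_solution_keeps_gaps by metis
  define x where "x k t = X t k" for k t
  show ?thesis
  proof (intro exI[of _ x] conjI allI impI ballI)
    show "x k 0 = x0 k" if "k < N" for k
      using X0[OF that] by (simp add: x_def)
    show "x k t < x (Suc k) t" if "t \<in> {0..<1}" "Suc k < N" for t k
      using gaps[of k t] that \<open>0 < \<delta>\<close> by (simp add: x_def gap_def)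
    fix k :: nat and t :: real
    assume "k < N" "t \<in> {0..<1}"
    have "((\<lambda>s. X s k) has_real_derivative velocity \<delta> (X t) k) (at t within {0..<1})"
      using \<open>t \<in> {0..<1}\<close> by (intro DERIV_subset[OF sol[OF \<open>k < N\<close>]]) auto
    moreover have "velocity \<delta> (X t) k = - (c / real N) * (\<Sum>j\<in>{..<N} - {k}. K' (x k t - x j t))
       - (real N / c) * (phi (disc_rho L c N x k t) - phi (disc_rho L c N x (prev_idx N k) t))"
      using velocity_eq_untruncated[OF \<open>0 < \<delta>\<close>, of "X t"] gaps[of _ t] \<open>k < N\<close> \<open>t \<in> {0..<1}\<close>
      by (simp add: disc_rho_eq x_def less_imp_le)
    ultimately show "((\<lambda>s. x k s) has_real_derivative
       - (c / real N) * (\<Sum>j\<in>{..<N} - {k}. K' (x k t - x j t))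
       - (real N / c) * (phi (disc_rho L c N x k t) - phi (disc_rho L c N x (prev_idx N k) t)))
       (at t within {0..<1})"
      by (simp add: x_def)
  qed
qed

end

theorem lemma4p6:
  fixes K K' K'' :: "real \<Rightarrow> real"
    and W W' phi phi' :: "real \<Rightarrow> real"
    and c0 c1 c2 rhohat rhobar :: real
  assumes K_even: "\<And>z. K z = K \<bar>z\<bar>"
    and K_cont: "continuous_on UNIV K"
    and K_d1: "\<And>z. z \<noteq> 0 \<Longrightarrow> (K has_real_derivative K' z) (at z)"
    and K_d2: "\<And>z. z \<noteq> 0 \<Longrightarrow> (K' has_real_derivative K'' z) (at z)"
    and K''_cont: "continuous_on (UNIV - {0}) K''"
    and K_bdd: "\<exists>B. \<forall>z. \<bar>K z\<bar> \<le> B"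
    and K'_bdd: "\<exists>B. \<forall>z. z \<noteq> 0 \<longrightarrow> \<bar>K' z\<bar> \<le> B"
    and K''_bdd: "\<exists>B. \<forall>z. z \<noteq> 0 \<longrightarrow> \<bar>K'' z\<bar> \<le> B"
    and K'_L1: "integrable lborel K'"
    and W_nonneg: "\<And>r. r \<ge> 0 \<Longrightarrow> W r \<ge> 0"
    and W_deriv: "\<And>r. r \<ge> 0 \<Longrightarrow> (W has_real_derivative W' r) (at r within {0..})"
    and phi_def: "\<And>r. phi r = r * W' r - W r"
    and phi_deriv: "\<And>r. r \<ge> 0 \<Longrightarrow> (phi has_real_derivative phi' r) (at r within {0..})"
    and phi'_cont: "continuous_on {0..} phi'"
    and phi_0: "phi 0 = 0"
    and phi_mono: "strict_mono_on {0..} phi"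
    and c0_pos: "c0 > 0"
    and phi'_bound: "\<And>r. r \<ge> 0 \<Longrightarrow> phi' r * r \<le> c0 * phi r"
    and phi_bound: "\<And>r. r \<ge> 0 \<Longrightarrow> phi r \<le> max r (c0 * W r)"
    and c12_pos: "c1 > 0" "c2 > 0"
    and rho_hb: "0 < rhohat" "rhohat < 1" "1 < rhobar"
    and phi_small: "\<And>r. 0 \<le> r \<Longrightarrow> r \<le> rhohat \<Longrightarrow> phi r \<le> c1 * r"
    and phi_large: "\<And>r. r \<ge> rhobar \<Longrightarrow> phi r \<ge> c2 * r"
  shows "\<forall>M::real. \<exists>T0>0. \<forall>L rho0.
           L > 0 \<longrightarrow> rho0 \<in> borel_measurable lborel \<longrightarrow>
           (\<forall>y. rho0 (y + L) = rho0 y) \<longrightarrow> (\<forall>y. rho0 y \<ge> 0) \<longrightarrow>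
           esssup lborel (\<lambda>y. ereal (rho0 y)) = ereal M \<longrightarrow>
           0 < mass_L L rho0 \<longrightarrow> mass_L L rho0 \<le> 1 \<longrightarrow>
           (\<forall>N::nat. N \<ge> 1 \<longrightarrow> particle_well_defined K' phi L rho0 N T0)"
proof -
  obtain B where B: "\<And>z. z \<noteq> 0 \<Longrightarrow> \<bar>K' z\<bar> \<le> B"
    using K'_bdd by blast
  obtain B2 where B2: "\<And>z. z \<noteq> 0 \<Longrightarrow> \<bar>K'' z\<bar> \<le> B2"
    using K''_bdd by blast
  have "particle_well_defined K' phi L rho0 N 1"
    if "0 < L" "rho0 \<in> borel_measurable lborel" "\<forall>y. 0 \<le> rho0 y"
      "esssup lborel (\<lambda>y. ereal (rho0 y)) = ereal M" "0 < mass_L L rho0" "1 \<le> N"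
    for L rho0 M and N :: nat
  proof -
    interpret particle_model N L "mass_L L rho0" K' K'' phi phi' B B2 c2 rhobar
      using that K_d2 B B2 phi_deriv phi'_cont phi_0 phi_mono c12_pos rho_hb phi_large
      by unfold_locales auto
    show ?thesis
      unfolding particle_well_defined_def Let_def
      using ordered_solution_exists[OF init_pos_increasing[OF that]] by simp
  qed
  then show ?thesis
    by (intro allI exI[of _ 1]) auto
qed

end
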